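(* Let $X$ be a real Banach space and $T:X\rightrightarrows X^*$ a monotone operator whose range $R_T$ is bounded. Consider the conditions: (i) for every $x^*\notin\overline{R_T}$, $\sup\left\{\frac{\langle x^*-z^*,z\rangle}{\|x^*-z^*\|}:(z,z^* )\in G(T)\right\}=\infty$; (ii) $\pi_2\,\mathrm{dom}\,\varphi_T\subset\overline{R_T}$; (iii) $\overline{R_T}=\overline{\mathrm{co}\,R_T}=\overline{\pi_2\,\mathrm{dom}\,\varphi_T}$; (iv) $\overline{R_T}$ is convex; (i$'$) for every $x^*\notin\overline{R_T}^{w^*}$, $\sup\left\{\frac{\langle x^*-z^*,z\rangle}{\|x^*-z^*\|}:(z,z^* )\in G(T)\right\}=\infty$; (ii$'$) $\pi_2\,\mathrm{dom}\,\varphi_T\subset\overline{R_T}^{w^*}$; (iii$'$) $\overline{R_T}^{w^*}=\overline{\mathrm{co}\,R_T}^{w^*}=\overline{\pi_2\,\mathrm{dom}\,\varphi_T}^{w^*}$; (iv$'$) $\overline{R_T}^{w^*}$ is convex. Then (i), (ii), (iii) are equivalent; (iii) $\Rightarrow$ (iv) $\Rightarrow$ (iv$'$); (i) $\Rightarrow$ (i$'$); (ii) $\Rightarrow$ (ii$'$) $\Rightarrow$ (iii$'$) $\Rightarrow$ (i$'$); and (iii$'$) $\Rightarrow$ (iv$'$). If moreover $T$ is maximal monotone, then (iv$'$) $\Rightarrow$ (i$'$).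
   Context: $X$ is a real Banach space with topological dual $X^*$ and pairing $\langle x,x^*\rangle$. A (multivalued) operator $T:X\rightrightarrows X^*$ has graph $G(T)=\{(x,x^* ):x^*\in T(x)\}$, domain $D_T=\{x:T(x)\neq\emptyset\}$ and range $R_T=\bigcup_{x}T(x)$. $T$ is monotone if $\langle x^*-y^*,x-y\rangle\ge0$ for all $(x,x^* ),(y,y^* )\in G(T)$; it is maximal monotone if no monotone operator has a graph strictly containing $G(T)$. The Fitzpatrick function of a monotone $T$ is $\varphi_T(x,x^* )=\sup\{\langle x^*-z^*,z-x\rangle:(z,z^* )\in G(T)\}+\langle x^*,x\rangle$, $\mathrm{dom}\,\varphi_T=\{(x,x^* ):\varphi_T(x,x^* )<\infty\}$, and $\pi_2:X\times X^*\to X^*$ is the projection. $\mathrm{co}$ denotes convex hull, bars denote norm closure, and $\overline{A}^{w^*}$ denotes weak$^*$ closure in $X^*$. *)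

theory Defs
  imports "HOL-Analysis.Analysis"
begin

text \<open>The dual space X* of a real Banach space X is modelled as the type
  of bounded linear functionals X \<rightarrow> real (bounded linear), with the operator norm.
  A multivalued operator T is represented by its graph G(T).\<close>

definition monotone_op :: "('a::real_normed_vector \<times> ('a \<Rightarrow>\<^sub>L real)) set \<Rightarrow> bool" where
  "monotone_op G \<longleftrightarrow>
     (\<forall>(x, xs)\<in>G. \<forall>(y, ys)\<in>G. blinfun_apply (xs - ys) (x - y) \<ge> 0)"

definition maximal_monotone_op :: "('a::real_normed_vector \<times> ('a \<Rightarrow>\<^sub>L real)) set \<Rightarrow> bool" where
  "maximal_monotone_op G \<longleftrightarrow>
     monotone_op G \<and> (\<forall>G'. monotone_op G' \<and> G \<subseteq> G' \<longrightarrow> G' = G)"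

definition fitzpatrick :: "('a::real_normed_vector \<times> ('a \<Rightarrow>\<^sub>L real)) set \<Rightarrow> 'a \<times> ('a \<Rightarrow>\<^sub>L real) \<Rightarrow> ereal" where
  "fitzpatrick G = (\<lambda>(x, xs).
     (SUP (z, zs)\<in>G. ereal (blinfun_apply (xs - zs) (z - x))) + ereal (blinfun_apply xs x))"

definition fitz_dom :: "('a::real_normed_vector \<times> ('a \<Rightarrow>\<^sub>L real)) set \<Rightarrow> ('a \<times> ('a \<Rightarrow>\<^sub>L real)) set" where
  "fitz_dom G = {p. fitzpatrick G p < \<infinity>}"

definition weak_star_open :: "('a::real_normed_vector \<Rightarrow>\<^sub>L real) set \<Rightarrow> bool" where
  "weak_star_open U \<longleftrightarrow>
     (\<forall>f\<in>U. \<exists>F e. finite F \<and> e > 0 \<and>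
        {g. \<forall>x\<in>F. \<bar>blinfun_apply g x - blinfun_apply f x\<bar> < e} \<subseteq> U)"

definition weak_star_topology :: "('a::real_normed_vector \<Rightarrow>\<^sub>L real) topology" where
  "weak_star_topology = topology weak_star_open"

definition weak_star_closure :: "('a::real_normed_vector \<Rightarrow>\<^sub>L real) set \<Rightarrow> ('a \<Rightarrow>\<^sub>L real) set" where
  "weak_star_closure S = weak_star_topology closure_of S"

lemma istopology_weak_star_open: "istopology weak_star_open"
  unfolding istopology_def
proof (intro conjI allI impI)
  fix S T :: "('a \<Rightarrow>\<^sub>L real) set"
  assume S: "weak_star_open S" and T: "weak_star_open T"
  show "weak_star_open (S \<inter> T)"
    unfolding weak_star_open_def
  proof
    fix f assume f: "f \<in> S \<inter> T"
    obtain F1 e1 where 1: "finite F1" "e1 > 0"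
      "{g. \<forall>x\<in>F1. \<bar>blinfun_apply g x - blinfun_apply f x\<bar> < e1} \<subseteq> S"
      using S f unfolding weak_star_open_def by blast
    obtain F2 e2 where 2: "finite F2" "e2 > 0"
      "{g. \<forall>x\<in>F2. \<bar>blinfun_apply g x - blinfun_apply f x\<bar> < e2} \<subseteq> T"
      using T f unfolding weak_star_open_def by blast
    show "\<exists>F e. finite F \<and> e > 0 \<and>
        {g. \<forall>x\<in>F. \<bar>blinfun_apply g x - blinfun_apply f x\<bar> < e} \<subseteq> S \<inter> T"
      apply (rule exI[of _ "F1 \<union> F2"], rule exI[of _ "min e1 e2"])
      using 1 2 by fastforce
  qed
next
  fix K :: "('a \<Rightarrow>\<^sub>L real) set set"
  assume "\<forall>S\<in>K. weak_star_open S"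
  then show "weak_star_open (\<Union>K)"
    unfolding weak_star_open_def by (meson Sup_upper2 UnionE)
qed

end

theory Submission
  imports Defs
begin

text \<open>Let D be the projection of the domain of the Fitzpatrick function onto X*. Because
  the range R of T is bounded, x* lies in D exactly when \<langle>x* - z*, z\<rangle> is bounded above
  on the graph, and for x* at positive distance from R this is equivalent to boundedness of the
  quotient in (i). Hence (i) and (i') say that D is contained in the norm, respectively weak*,
  closure of R. Monotonicity gives R \<subseteq> D, and D is convex because the Fitzpatrick function is
  a supremum of affine functions; this produces the chains of closures in (iii) and (iii').
  For (iv') \<Longrightarrow> (i') under maximality: a point x* \<in> D outside the convex weak* closure of R
  is strictly separated from co R by the evaluation at some w \<in> X (weak* neighbourhoods involve
  only finitely many evaluations, so a projection argument in finite dimensions suffices).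
  Then (t w, x*) is monotonically related to the graph for large t, and maximality puts x* in R.\<close>

lemma SUP_ereal_eq_infinity_iff:
  "(SUP i\<in>A. ereal (f i)) = \<infinity> \<longleftrightarrow> \<not> bdd_above (f ` A)"
proof
  assume inf: "(SUP i\<in>A. ereal (f i)) = \<infinity>"
  show "\<not> bdd_above (f ` A)"
  proof
    assume "bdd_above (f ` A)"
    then obtain B where "\<And>i. i \<in> A \<Longrightarrow> f i \<le> B" by (auto simp: bdd_above_def)
    then have "(SUP i\<in>A. ereal (f i)) \<le> ereal B" by (simp add: SUP_least)
    with inf show False by simp
  qed
next
  assume unbdd: "\<not> bdd_above (f ` A)"
  have "\<exists>i\<in>A. ereal (real n) \<le> ereal (f i)" for n :: nat
  proof (rule ccontr)
    assume "\<not> (\<exists>i\<in>A. ereal (real n) \<le> ereal (f i))"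
    then have "\<And>i. i \<in> A \<Longrightarrow> f i \<le> real n" by auto
    then show False using unbdd by (metis bdd_aboveI2)
  qed
  then show "(SUP i\<in>A. ereal (f i)) = \<infinity>" by (rule SUP_PInfty)
qed

lemma bdd_above_image_plus_const:
  fixes f :: "'b \<Rightarrow> real"
  shows "bdd_above ((\<lambda>i. f i + c) ` A) \<longleftrightarrow> bdd_above (f ` A)"
proof
  assume "bdd_above ((\<lambda>i. f i + c) ` A)"
  then obtain M where "\<And>i. i \<in> A \<Longrightarrow> f i + c \<le> M" by (auto simp: bdd_above_def)
  then have "\<And>i. i \<in> A \<Longrightarrow> f i \<le> M - c" by (simp add: le_diff_eq)
  then show "bdd_above (f ` A)" by (rule bdd_aboveI2)
next
  assume "bdd_above (f ` A)"
  then obtain M where "\<And>i. i \<in> A \<Longrightarrow> f i \<le> M" by (auto simp: bdd_above_def)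
  then have "\<And>i. i \<in> A \<Longrightarrow> f i + c \<le> M + c" by simp
  then show "bdd_above ((\<lambda>i. f i + c) ` A)" by (rule bdd_aboveI2)
qed

lemma bdd_above_image_divide_iff:
  fixes f g :: "'b \<Rightarrow> real"
  assumes "0 < d" and g: "\<And>i. i \<in> A \<Longrightarrow> d \<le> g i \<and> g i \<le> N"
  shows "bdd_above ((\<lambda>i. f i / g i) ` A) \<longleftrightarrow> bdd_above (f ` A)"
proof
  assume "bdd_above ((\<lambda>i. f i / g i) ` A)"
  then obtain B where B: "\<And>i. i \<in> A \<Longrightarrow> f i / g i \<le> B" by (auto simp: bdd_above_def)
  have "f i \<le> \<bar>B\<bar> * N" if "i \<in> A" for i
  proof -
    have "0 < g i" using g[OF that] \<open>0 < d\<close> by linarith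
    then have "f i \<le> B * g i" using B[OF that] by (simp add: pos_divide_le_eq)
    also have "\<dots> \<le> \<bar>B\<bar> * N" using g[OF that] \<open>0 < g i\<close>
      by (smt (verit) abs_ge_self abs_ge_zero mult_mono mult_right_mono)
    finally show ?thesis .
  qed
  then show "bdd_above (f ` A)" by (rule bdd_aboveI2)
next
  assume "bdd_above (f ` A)"
  then obtain B where B: "\<And>i. i \<in> A \<Longrightarrow> f i \<le> B" by (auto simp: bdd_above_def)
  have "f i / g i \<le> \<bar>B\<bar> / d" if "i \<in> A" for i
  proof -
    have "0 < g i" using g[OF that] \<open>0 < d\<close> by linarith
    then have "f i / g i \<le> \<bar>B\<bar> / g i" using B[OF that] by (simp add: divide_right_mono)
    also have "\<dots> \<le> \<bar>B\<bar> / d" using g[OF that] \<open>0 < d\<close> by (simp add: frac_le)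
    finally show ?thesis .
  qed
  then show "bdd_above ((\<lambda>i. f i / g i) ` A)" by (rule bdd_aboveI2)
qed

lemma fitzpatrick_coupling_eq:
  "blinfun_apply (xs - zs) (z - x) + blinfun_apply xs x
    = blinfun_apply xs z + blinfun_apply zs x - blinfun_apply zs z"
  by (simp add: blinfun.diff_left blinfun.diff_right)

lemma fitz_dom_iff:
  "(x, xs) \<in> fitz_dom G \<longleftrightarrow>
    bdd_above ((\<lambda>(z, zs). blinfun_apply xs z + blinfun_apply zs x - blinfun_apply zs z) ` G)"
proof -
  let ?f = "\<lambda>(z, zs). blinfun_apply (xs - zs) (z - x)"
  have "(x, xs) \<in> fitz_dom G \<longleftrightarrow> (SUP p\<in>G. ereal (?f p)) + ereal (blinfun_apply xs x) < \<infinity>"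
    unfolding fitz_dom_def fitzpatrick_def by (simp add: case_prod_beta')
  also have "\<dots> \<longleftrightarrow> (SUP p\<in>G. ereal (?f p)) \<noteq> \<infinity>"
    by (cases "SUP p\<in>G. ereal (?f p)") auto
  also have "\<dots> \<longleftrightarrow> bdd_above (?f ` G)"
    by (simp add: SUP_ereal_eq_infinity_iff)
  also have "\<dots> \<longleftrightarrow> bdd_above ((\<lambda>p. ?f p + blinfun_apply xs x) ` G)"
    by (rule bdd_above_image_plus_const[symmetric])
  also have "(\<lambda>p. ?f p + blinfun_apply xs x) = (\<lambda>(z, zs). blinfun_apply xs z + blinfun_apply zs x - blinfun_apply zs z)"
    by (auto simp: fitzpatrick_coupling_eq)
  finally show ?thesis .
qed

lemma graph_subset_fitz_dom:
  assumes "monotone_op G"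
  shows "G \<subseteq> fitz_dom G"
proof clarify
  fix x xs assume "(x, xs) \<in> G"
  have "blinfun_apply xs z + blinfun_apply zs x - blinfun_apply zs z \<le> blinfun_apply xs x"
    if "(z, zs) \<in> G" for z zs
    using assms \<open>(x, xs) \<in> G\<close> that unfolding monotone_op_def
    by (fastforce simp: blinfun.diff_left blinfun.diff_right)
  then show "(x, xs) \<in> fitz_dom G"
    unfolding fitz_dom_iff by (intro bdd_aboveI2[of _ _ "blinfun_apply xs x"]) auto
qed

lemma convex_fitz_dom: "convex (fitz_dom G)"
proof (rule convexI, clarify)
  fix x xs y ys and u v :: real
  assume "(x, xs) \<in> fitz_dom G" "(y, ys) \<in> fitz_dom G" and uv: "0 \<le> u" "0 \<le> v" "u + v = 1"
  then obtain A B where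
    A: "\<And>z zs. (z, zs) \<in> G \<Longrightarrow> blinfun_apply xs z + blinfun_apply zs x - blinfun_apply zs z \<le> A" and
    B: "\<And>z zs. (z, zs) \<in> G \<Longrightarrow> blinfun_apply ys z + blinfun_apply zs y - blinfun_apply zs z \<le> B"
    unfolding fitz_dom_iff bdd_above_def by fastforce
  have "blinfun_apply (u *\<^sub>R xs + v *\<^sub>R ys) z + blinfun_apply zs (u *\<^sub>R x + v *\<^sub>R y)
      - blinfun_apply zs z \<le> u * A + v * B" if "(z, zs) \<in> G" for z zs
  proof -
    have "blinfun_apply (u *\<^sub>R xs + v *\<^sub>R ys) z + blinfun_apply zs (u *\<^sub>R x + v *\<^sub>R y)
        - blinfun_apply zs z
      = u * (blinfun_apply xs z + blinfun_apply zs x - blinfun_apply zs z)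
        + v * (blinfun_apply ys z + blinfun_apply zs y - blinfun_apply zs z)"
      using uv(3) by (simp add: blinfun.add_left blinfun.scaleR_left blinfun.add_right
          blinfun.scaleR_right algebra_simps flip: distrib_right)
    also have "\<dots> \<le> u * A + v * B"
      using A[OF that] B[OF that] uv by (intro add_mono mult_left_mono) auto
    finally show ?thesis .
  qed
  then have "(u *\<^sub>R x + v *\<^sub>R y, u *\<^sub>R xs + v *\<^sub>R ys) \<in> fitz_dom G"
    unfolding fitz_dom_iff by (intro bdd_aboveI2[of _ _ "u * A + v * B"]) auto
  then show "u *\<^sub>R (x, xs) + v *\<^sub>R (y, ys) \<in> fitz_dom G" by simp
qed

lemma mem_snd_fitz_dom_iff:
  fixes G :: "('a::real_normed_vector \<times> ('a \<Rightarrow>\<^sub>L real)) set"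
  assumes "bounded (snd ` G)"
  shows "xs \<in> snd ` fitz_dom G \<longleftrightarrow> bdd_above ((\<lambda>(z, zs). blinfun_apply (xs - zs) z) ` G)"
proof
  assume "xs \<in> snd ` fitz_dom G"
  then obtain x where "(x, xs) \<in> fitz_dom G" by force
  then obtain B where
    B: "\<And>z zs. (z, zs) \<in> G \<Longrightarrow> blinfun_apply xs z + blinfun_apply zs x - blinfun_apply zs z \<le> B"
    unfolding fitz_dom_iff bdd_above_def by fastforce
  obtain M where M: "\<And>zs. zs \<in> snd ` G \<Longrightarrow> norm zs \<le> M"
    using assms unfolding bounded_iff by blast
  have "blinfun_apply (xs - zs) z \<le> B + M * norm x" if "(z, zs) \<in> G" for z zs
  proof -
    have "- blinfun_apply zs x \<le> norm zs * norm x"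
      using norm_blinfun[of zs x] by (simp add: abs_le_iff)
    also have "\<dots> \<le> M * norm x"
      using M[of zs] that by (force intro: mult_right_mono)
    finally show ?thesis using B[OF that] by (simp add: blinfun.diff_left)
  qed
  then show "bdd_above ((\<lambda>(z, zs). blinfun_apply (xs - zs) z) ` G)"
    by (intro bdd_aboveI2[of _ _ "B + M * norm x"]) auto
next
  assume "bdd_above ((\<lambda>(z, zs). blinfun_apply (xs - zs) z) ` G)"
  then have "(0, xs) \<in> fitz_dom G"
    unfolding fitz_dom_iff by (simp add: blinfun.diff_left case_prod_beta')
  then show "xs \<in> snd ` fitz_dom G" by force
qed

lemma SUP_ratio_eq_infinity_iff:
  fixes G :: "('a::real_normed_vector \<times> ('a \<Rightarrow>\<^sub>L real)) set"
  assumes bdd: "bounded (snd ` G)" and xs: "xs \<notin> closure (snd ` G)"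
  shows "(SUP (z, zs)\<in>G. ereal (blinfun_apply (xs - zs) z / norm (xs - zs))) = \<infinity>
    \<longleftrightarrow> xs \<notin> snd ` fitz_dom G"
proof -
  obtain d where "d > 0" and d: "\<And>zs. zs \<in> snd ` G \<Longrightarrow> d \<le> dist zs xs"
    using xs unfolding closure_approachable by (meson not_le)
  obtain M where M: "\<And>zs. zs \<in> snd ` G \<Longrightarrow> norm zs \<le> M"
    using bdd unfolding bounded_iff by blast
  have norms: "d \<le> norm (xs - snd p) \<and> norm (xs - snd p) \<le> norm xs + M" if "p \<in> G" for p
    using d[of "snd p"] M[of "snd p"] norm_triangle_ineq4[of xs "snd p"] that
    by (auto simp: dist_norm norm_minus_commute)
  have "(SUP (z, zs)\<in>G. ereal (blinfun_apply (xs - zs) z / norm (xs - zs))) = \<infinity>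
    \<longleftrightarrow> \<not> bdd_above ((\<lambda>p. blinfun_apply (xs - snd p) (fst p) / norm (xs - snd p)) ` G)"
    by (simp add: case_prod_beta' SUP_ereal_eq_infinity_iff)
  also have "\<dots> \<longleftrightarrow> \<not> bdd_above ((\<lambda>p. blinfun_apply (xs - snd p) (fst p)) ` G)"
    using bdd_above_image_divide_iff[OF \<open>d > 0\<close> norms] by simp
  also have "\<dots> \<longleftrightarrow> xs \<notin> snd ` fitz_dom G"
    using mem_snd_fitz_dom_iff[OF bdd] by (simp add: case_prod_beta')
  finally show ?thesis .
qed

lemma openin_weak_star_topology: "openin weak_star_topology = weak_star_open"
  unfolding weak_star_topology_def by (rule topology_inverse'[OF istopology_weak_star_open])

lemma topspace_weak_star_topology [simp]: "topspace weak_star_topology = UNIV"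
proof -
  have "weak_star_open (UNIV :: ('a::real_normed_vector \<Rightarrow>\<^sub>L real) set)"
    unfolding weak_star_open_def by (intro ballI exI[of _ "{}"] exI[of _ 1]) auto
  then show ?thesis unfolding topspace_def openin_weak_star_topology by blast
qed

lemma weak_star_open_evaluation_ball:
  fixes f :: "'a::real_normed_vector \<Rightarrow>\<^sub>L real"
  assumes "finite F" "e > 0"
  shows "weak_star_open {g. \<forall>x\<in>F. \<bar>blinfun_apply g x - blinfun_apply f x\<bar> < e}"
  unfolding weak_star_open_def
proof
  fix g assume g: "g \<in> {g. \<forall>x\<in>F. \<bar>blinfun_apply g x - blinfun_apply f x\<bar> < e}"
  define m where "m = Max (insert 0 ((\<lambda>x. \<bar>blinfun_apply g x - blinfun_apply f x\<bar>) ` F))"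
  have "m < e" unfolding m_def using assms g by (subst Max_less_iff) auto
  moreover have "\<bar>blinfun_apply g x - blinfun_apply f x\<bar> \<le> m" if "x \<in> F" for x
    unfolding m_def using assms that by (intro Max_ge) auto
  ultimately have "{h. \<forall>x\<in>F. \<bar>blinfun_apply h x - blinfun_apply g x\<bar> < e - m}
      \<subseteq> {g. \<forall>x\<in>F. \<bar>blinfun_apply g x - blinfun_apply f x\<bar> < e}"
    by (force simp: abs_less_iff abs_le_iff)
  then show "\<exists>F' e'. finite F' \<and> e' > 0 \<and> {h. \<forall>x\<in>F'. \<bar>blinfun_apply h x - blinfun_apply g x\<bar> < e'}
      \<subseteq> {g. \<forall>x\<in>F. \<bar>blinfun_apply g x - blinfun_apply f x\<bar> < e}"
    using \<open>m < e\<close> \<open>finite F\<close> by (intro exI[of _ F] exI[of _ "e - m"]) auto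
qed

lemma weak_star_closure_iff:
  fixes f :: "'a::real_normed_vector \<Rightarrow>\<^sub>L real"
  shows "f \<in> weak_star_closure S \<longleftrightarrow>
    (\<forall>F e. finite F \<and> e > 0 \<longrightarrow> (\<exists>s\<in>S. \<forall>x\<in>F. \<bar>blinfun_apply s x - blinfun_apply f x\<bar> < e))"
  unfolding weak_star_closure_def in_closure_of topspace_weak_star_topology
    openin_weak_star_topology
proof safe
  fix F :: "'a set" and e :: real
  assume H: "\<forall>T. f \<in> T \<and> weak_star_open T \<longrightarrow> (\<exists>s. s \<in> S \<and> s \<in> T)"
    and "finite F" "e > 0"
  have "\<exists>s. s \<in> S \<and> s \<in> {g. \<forall>x\<in>F. \<bar>blinfun_apply g x - blinfun_apply f x\<bar> < e}"
    using \<open>e > 0\<close>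
    by (intro H[rule_format] conjI weak_star_open_evaluation_ball[OF \<open>finite F\<close>]) simp_all
  then show "\<exists>s\<in>S. \<forall>x\<in>F. \<bar>blinfun_apply s x - blinfun_apply f x\<bar> < e" by blast
next
  fix T assume "f \<in> T" "weak_star_open T"
    and "\<forall>F e. finite F \<and> e > 0 \<longrightarrow> (\<exists>s\<in>S. \<forall>x\<in>F. \<bar>blinfun_apply s x - blinfun_apply f x\<bar> < e)"
  then show "\<exists>s. s \<in> S \<and> s \<in> T" unfolding weak_star_open_def by blast
qed simp

lemma weak_star_closure_subset: "S \<subseteq> weak_star_closure S"
  unfolding weak_star_closure_def by (rule closure_of_subset) simp

lemma weak_star_closure_minimal: "S \<subseteq> weak_star_closure T \<Longrightarrow> weak_star_closure S \<subseteq> weak_star_closure T"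
  unfolding weak_star_closure_def by (rule closure_of_minimal) simp_all

lemma closure_subset_weak_star_closure:
  fixes S :: "('a::real_normed_vector \<Rightarrow>\<^sub>L real) set"
  shows "closure S \<subseteq> weak_star_closure S"
proof
  fix f assume f: "f \<in> closure S"
  show "f \<in> weak_star_closure S" unfolding weak_star_closure_iff
  proof (intro allI impI)
    fix F :: "'a set" and e :: real assume "finite F \<and> e > 0"
    define B where "B = (\<Sum>x\<in>F. norm x) + 1"
    have "B > 0" and B: "\<And>x. x \<in> F \<Longrightarrow> norm x \<le> B"
      unfolding B_def using \<open>finite F \<and> e > 0\<close>
      by (auto intro!: add_nonneg_pos sum_nonneg member_le_sum[where f=norm, THEN order.trans])
    obtain s where "s \<in> S" "dist s f < e / B"
      using f \<open>finite F \<and> e > 0\<close> \<open>B > 0\<close> unfolding closure_approachable by (meson divide_pos_pos)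
    moreover have "\<bar>blinfun_apply s x - blinfun_apply f x\<bar> < e" if "x \<in> F" and "dist s f < e / B" for x
    proof -
      have "\<bar>blinfun_apply s x - blinfun_apply f x\<bar> \<le> norm (s - f) * norm x"
        using norm_blinfun[of "s - f" x] by (simp add: blinfun.diff_left)
      also have "\<dots> \<le> norm (s - f) * B" using B[OF \<open>x \<in> F\<close>] by (simp add: mult_left_mono)
      also have "\<dots> < e" using \<open>dist s f < e / B\<close> \<open>B > 0\<close> by (simp add: dist_norm pos_less_divide_eq)
      finally show ?thesis .
    qed
    ultimately show "\<exists>s\<in>S. \<forall>x\<in>F. \<bar>blinfun_apply s x - blinfun_apply f x\<bar> < e" by blast
  qed
qed

lemma weak_star_closure_closure: "weak_star_closure (closure S) = weak_star_closure S"
proof (rule antisym)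
  show "weak_star_closure (closure S) \<subseteq> weak_star_closure S"
    by (rule weak_star_closure_minimal[OF closure_subset_weak_star_closure])
  show "weak_star_closure S \<subseteq> weak_star_closure (closure S)"
    unfolding weak_star_closure_def by (rule closure_of_mono[OF closure_subset])
qed

lemma convex_weak_star_closure:
  fixes S :: "('a::real_normed_vector \<Rightarrow>\<^sub>L real) set"
  assumes "convex S"
  shows "convex (weak_star_closure S)"
proof (rule convexI)
  fix f g :: "'a \<Rightarrow>\<^sub>L real" and u v :: real
  assume f: "f \<in> weak_star_closure S" and g: "g \<in> weak_star_closure S"
    and uv: "0 \<le> u" "0 \<le> v" "u + v = 1"
  show "u *\<^sub>R f + v *\<^sub>R g \<in> weak_star_closure S" unfolding weak_star_closure_iff
  proof (intro allI impI)
    fix F :: "'a set" and e :: real assume Fe: "finite F \<and> e > 0"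
    obtain s where s: "s \<in> S" "\<forall>x\<in>F. \<bar>blinfun_apply s x - blinfun_apply f x\<bar> < e"
      using f Fe unfolding weak_star_closure_iff by blast
    obtain t where t: "t \<in> S" "\<forall>x\<in>F. \<bar>blinfun_apply t x - blinfun_apply g x\<bar> < e"
      using g Fe unfolding weak_star_closure_iff by blast
    have "\<bar>blinfun_apply (u *\<^sub>R s + v *\<^sub>R t) x - blinfun_apply (u *\<^sub>R f + v *\<^sub>R g) x\<bar> < e"
      if "x \<in> F" for x
    proof -
      have "\<bar>blinfun_apply (u *\<^sub>R s + v *\<^sub>R t) x - blinfun_apply (u *\<^sub>R f + v *\<^sub>R g) x\<bar>
          = \<bar>u * (blinfun_apply s x - blinfun_apply f x) + v * (blinfun_apply t x - blinfun_apply g x)\<bar>"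
        by (simp add: blinfun.add_left blinfun.scaleR_left algebra_simps)
      also have "\<dots> \<le> u * \<bar>blinfun_apply s x - blinfun_apply f x\<bar> + v * \<bar>blinfun_apply t x - blinfun_apply g x\<bar>"
        using uv by (simp add: abs_mult abs_triangle_ineq[THEN order.trans])
      also have "\<dots> < u * e + v * e"
        using uv s(2) t(2) that by (smt (verit) mult_left_mono mult_strict_left_mono)
      finally show ?thesis using uv(3) by (simp flip: distrib_right)
    qed
    moreover have "u *\<^sub>R s + v *\<^sub>R t \<in> S" using assms s(1) t(1) uv by (rule convexD)
    ultimately show "\<exists>s\<in>S. \<forall>x\<in>F. \<bar>blinfun_apply s x - blinfun_apply (u *\<^sub>R f + v *\<^sub>R g) x\<bar> < e"
      by blast
  qed
qed

lemma subset_closure_of_iff_closure_of_eq: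
  assumes "R \<subseteq> H" "H \<subseteq> D" "D \<subseteq> topspace X"
  shows "D \<subseteq> X closure_of R \<longleftrightarrow>
    X closure_of R = X closure_of H \<and> X closure_of H = X closure_of D"
proof
  assume "D \<subseteq> X closure_of R"
  then have "X closure_of D \<subseteq> X closure_of R"
    by (rule closure_of_minimal) simp
  moreover have "X closure_of R \<subseteq> X closure_of H" "X closure_of H \<subseteq> X closure_of D"
    using assms(1,2) by (simp_all add: closure_of_mono)
  ultimately show "X closure_of R = X closure_of H \<and> X closure_of H = X closure_of D"
    by blast
next
  assume "X closure_of R = X closure_of H \<and> X closure_of H = X closure_of D"
  then show "D \<subseteq> X closure_of R" using closure_of_subset[OF assms(3)] by simp
qed

lemma near_minimum_slope_bound:
  fixes m q a s D t :: real
  assumes "m \<le> q + 2 * t * a + t\<^sup>2 * s" "q < m + t * m / 2" "s \<le> D" "t * D \<le> m / 2" "0 < t"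
  shows "- m / 2 < a"
proof -
  have "0 < t * m / 2 + 2 * t * a + t\<^sup>2 * s" using assms(1,2) by linarith
  also have "\<dots> \<le> t * (m / 2 + 2 * a + t * D)"
    using mult_left_mono[OF assms(3), of "t\<^sup>2"] \<open>0 < t\<close>
    by (simp add: power2_eq_square algebra_simps)
  finally have "0 < m / 2 + 2 * a + t * D" using \<open>0 < t\<close> by (simp add: zero_less_mult_iff)
  then show ?thesis using assms(4) by linarith
qed

lemma sum_sq_eval_convex_combination:
  fixes k c p :: "'a::real_normed_vector \<Rightarrow>\<^sub>L real"
  shows "(\<Sum>x\<in>F. (blinfun_apply ((1 - t) *\<^sub>R k + t *\<^sub>R c) x - blinfun_apply p x)\<^sup>2)
    = (\<Sum>x\<in>F. (blinfun_apply k x - blinfun_apply p x)\<^sup>2)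
      + 2 * t * (\<Sum>x\<in>F. (blinfun_apply k x - blinfun_apply p x) * (blinfun_apply c x - blinfun_apply k x))
      + t\<^sup>2 * (\<Sum>x\<in>F. (blinfun_apply c x - blinfun_apply k x)\<^sup>2)"
  by (simp add: blinfun.add_left blinfun.scaleR_left sum_distrib_left flip: sum.distrib)
    (simp add: power2_eq_square algebra_simps)

lemma sum_sq_eval_diff_le:
  fixes c k :: "'a::real_normed_vector \<Rightarrow>\<^sub>L real"
  assumes "norm c \<le> M" "norm k \<le> M"
  shows "(\<Sum>x\<in>F. (blinfun_apply c x - blinfun_apply k x)\<^sup>2) \<le> (\<Sum>x\<in>F. (2 * M * norm x)\<^sup>2)"
proof (rule sum_mono)
  fix x
  have "\<bar>blinfun_apply c x - blinfun_apply k x\<bar> \<le> norm (c - k) * norm x"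
    using norm_blinfun[of "c - k" x] by (simp add: blinfun.diff_left)
  also have "\<dots> \<le> 2 * M * norm x"
    using norm_triangle_ineq4[of c k] assms by (intro mult_right_mono) auto
  finally show "(blinfun_apply c x - blinfun_apply k x)\<^sup>2 \<le> (2 * M * norm x)\<^sup>2"
    by (metis abs_ge_zero power2_abs power_mono)
qed

lemma finite_evaluation_separation:
  fixes K :: "('a::real_normed_vector \<Rightarrow>\<^sub>L real) set"
  assumes K: "convex K" "K \<noteq> {}" "bounded K" and "finite F" "e > 0"
    and far: "\<And>c. c \<in> K \<Longrightarrow> \<exists>x\<in>F. e \<le> \<bar>blinfun_apply c x - blinfun_apply p x\<bar>"
  obtains w \<delta> where "\<delta> > 0" "\<And>c. c \<in> K \<Longrightarrow> blinfun_apply c w \<le> blinfun_apply p w - \<delta>"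
proof -
  define Q where "Q c = (\<Sum>x\<in>F. (blinfun_apply c x - blinfun_apply p x)\<^sup>2)" for c
  have Q_ge: "e\<^sup>2 \<le> Q c" if c: "c \<in> K" for c
  proof -
    obtain x where "x \<in> F" "e \<le> \<bar>blinfun_apply c x - blinfun_apply p x\<bar>" using far[OF c] by blast
    then have "e\<^sup>2 \<le> (blinfun_apply c x - blinfun_apply p x)\<^sup>2"
      using \<open>e > 0\<close> abs_le_square_iff[of e "blinfun_apply c x - blinfun_apply p x"] by simp
    also have "\<dots> \<le> Q c" unfolding Q_def using \<open>finite F\<close> \<open>x \<in> F\<close> by (intro member_le_sum) auto
    finally show ?thesis .
  qed
  define m where "m = Inf (Q ` K)"
  have m_le: "m \<le> Q c" if "c \<in> K" for c
    unfolding m_def using Q_ge that by (intro cInf_lower bdd_belowI2) auto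
  have "e\<^sup>2 \<le> m" unfolding m_def using K(2) Q_ge by (intro cInf_greatest) auto
  moreover have "0 < e\<^sup>2" using \<open>e > 0\<close> by simp
  ultimately have "0 < m" by linarith
  obtain M where M: "\<And>c. c \<in> K \<Longrightarrow> norm c \<le> M" using K(3) unfolding bounded_iff by blast
  define D where "D = (\<Sum>x\<in>F. (2 * M * norm x)\<^sup>2)"
  have "0 \<le> D" unfolding D_def by (simp add: sum_nonneg)
  define t where "t = min 1 (m / (2 * (D + 1)))"
  have "0 < t" "t \<le> 1" unfolding t_def using \<open>0 < m\<close> \<open>0 \<le> D\<close> by auto
  have "t * D \<le> m / (2 * (D + 1)) * D"
    unfolding t_def using \<open>0 \<le> D\<close> by (intro mult_right_mono) auto
  also have "\<dots> \<le> m / 2" using \<open>0 \<le> D\<close> \<open>0 < m\<close> by (simp add: field_simps)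
  finally have "t * D \<le> m / 2" .
  (* k approximately minimises the distance from p measured by the evaluations at F, i.e. it
     approximates a projection of p onto K; the variational inequality at k makes the direction
     w below separating. *)
  obtain k where "k \<in> K" and k: "Q k < m + t * m / 2"
    using cInf_lessD[of "Q ` K" "m + t * m / 2"] K(2) \<open>0 < t\<close> \<open>0 < m\<close> unfolding m_def by auto
  define w where "w = (\<Sum>x\<in>F. (blinfun_apply p x - blinfun_apply k x) *\<^sub>R x)"
  have "blinfun_apply c w \<le> blinfun_apply p w - m / 2" if c: "c \<in> K" for c
  proof -
    define a where
      "a = (\<Sum>x\<in>F. (blinfun_apply k x - blinfun_apply p x) * (blinfun_apply c x - blinfun_apply k x))"
    define s where "s = (\<Sum>x\<in>F. (blinfun_apply c x - blinfun_apply k x)\<^sup>2)"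
    have "m \<le> Q ((1 - t) *\<^sub>R k + t *\<^sub>R c)"
      using \<open>0 < t\<close> \<open>t \<le> 1\<close> \<open>k \<in> K\<close> c by (intro m_le convexD K(1)) auto
    also have "\<dots> = Q k + 2 * t * a + t\<^sup>2 * s"
      unfolding Q_def a_def s_def by (rule sum_sq_eval_convex_combination)
    finally have "m \<le> Q k + 2 * t * a + t\<^sup>2 * s" .
    moreover note k
    moreover have "s \<le> D" unfolding s_def D_def by (rule sum_sq_eval_diff_le[OF M[OF c] M[OF \<open>k \<in> K\<close>]])
    ultimately have "- m / 2 < a"
      using \<open>t * D \<le> m / 2\<close> \<open>0 < t\<close> by (rule near_minimum_slope_bound)
    have "blinfun_apply d w = (\<Sum>x\<in>F. (blinfun_apply p x - blinfun_apply k x) * blinfun_apply d x)" for d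
      unfolding w_def by (simp add: blinfun.sum_right blinfun.scaleR_right)
    then have "blinfun_apply p w - blinfun_apply c w
        = (\<Sum>x\<in>F. (blinfun_apply k x - blinfun_apply p x) * (blinfun_apply c x - blinfun_apply p x))"
      by (simp add: algebra_simps flip: sum_subtractf)
    also have "\<dots> = Q k + a"
      unfolding Q_def a_def by (simp add: power2_eq_square algebra_simps flip: sum.distrib)
    finally show ?thesis using \<open>- m / 2 < a\<close> m_le[OF \<open>k \<in> K\<close>] by linarith
  qed
  then show thesis using \<open>0 < m\<close> by (intro that[of "m / 2"]) auto
qed

lemma weak_star_separation:
  fixes K :: "('a::real_normed_vector \<Rightarrow>\<^sub>L real) set"
  assumes "convex K" "bounded K" "p \<notin> weak_star_closure K"
  obtains w \<delta> where "\<delta> > 0" "\<And>c. c \<in> K \<Longrightarrow> blinfun_apply c w \<le> blinfun_apply p w - \<delta>"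
proof (cases "K = {}")
  case False
  obtain F e where "finite F" "e > 0"
    and "\<not> (\<exists>c\<in>K. \<forall>x\<in>F. \<bar>blinfun_apply c x - blinfun_apply p x\<bar> < e)"
    using assms(3) unfolding weak_star_closure_iff by blast
  then have "\<And>c. c \<in> K \<Longrightarrow> \<exists>x\<in>F. e \<le> \<bar>blinfun_apply c x - blinfun_apply p x\<bar>"
    by (auto simp: not_less)
  from finite_evaluation_separation[OF assms(1) False assms(2) \<open>finite F\<close> \<open>e > 0\<close> this] that
  show thesis by blast
qed (use that[of 1] in auto)

lemma monotone_op_insert:
  assumes "monotone_op G" and "\<And>z zs. (z, zs) \<in> G \<Longrightarrow> 0 \<le> blinfun_apply (xs - zs) (x - z)"
  shows "monotone_op (insert (x, xs) G)"
  unfolding monotone_op_def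
proof (intro ballI, clarify)
  fix a as b bs assume a: "(a, as) \<in> insert (x, xs) G" and b: "(b, bs) \<in> insert (x, xs) G"
  have swap: "blinfun_apply (bs - as) (b - a) = blinfun_apply (as - bs) (a - b)"
    by (simp add: blinfun.diff_left blinfun.diff_right algebra_simps)
  from a b show "0 \<le> blinfun_apply (as - bs) (a - b)"
  proof (elim insertE)
    assume "(a, as) \<in> G" "(b, bs) \<in> G"
    then show ?thesis using assms(1) unfolding monotone_op_def by fastforce
  next
    assume "(a, as) = (x, xs)" "(b, bs) \<in> G"
    then show ?thesis using assms(2) by auto
  next
    assume "(a, as) \<in> G" "(b, bs) = (x, xs)"
    then show ?thesis using assms(2)[of a as] swap by auto
  qed auto
qed

lemma maximal_monotone_separated_mem_range:
  assumes "maximal_monotone_op G"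
    and "bdd_above ((\<lambda>(z, zs). blinfun_apply (xs - zs) z) ` G)"
    and "\<delta> > 0" "\<And>zs. zs \<in> snd ` G \<Longrightarrow> blinfun_apply zs w \<le> blinfun_apply xs w - \<delta>"
  shows "xs \<in> snd ` G"
proof -
  obtain B where B: "\<And>z zs. (z, zs) \<in> G \<Longrightarrow> blinfun_apply (xs - zs) z \<le> B"
    using assms(2) unfolding bdd_above_def by fastforce
  define t where "t = (\<bar>B\<bar> + 1) / \<delta>"
  have "0 \<le> blinfun_apply (xs - zs) (t *\<^sub>R w - z)" if "(z, zs) \<in> G" for z zs
  proof -
    have "\<bar>B\<bar> + 1 = t * \<delta>" unfolding t_def using \<open>\<delta> > 0\<close> by simp
    also have "\<dots> \<le> t * (blinfun_apply xs w - blinfun_apply zs w)"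
      using assms(4)[of zs] that \<open>\<delta> > 0\<close> unfolding t_def by (intro mult_left_mono) force+
    finally show ?thesis
      using B[OF that] by (simp add: blinfun.diff_left blinfun.diff_right blinfun.scaleR_right algebra_simps)
  qed
  then have "monotone_op (insert (t *\<^sub>R w, xs) G)"
    using assms(1) unfolding maximal_monotone_op_def by (intro monotone_op_insert) auto
  then have "insert (t *\<^sub>R w, xs) G = G"
    using assms(1) unfolding maximal_monotone_op_def by blast
  then show ?thesis by force
qed

lemma snd_fitz_dom_subset_weak_star_closure:
  fixes G :: "('a::real_normed_vector \<times> ('a \<Rightarrow>\<^sub>L real)) set"
  assumes "maximal_monotone_op G" "bounded (snd ` G)" "convex (weak_star_closure (snd ` G))"
  shows "snd ` fitz_dom G \<subseteq> weak_star_closure (snd ` G)"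
proof
  fix xs assume xs: "xs \<in> snd ` fitz_dom G"
  show "xs \<in> weak_star_closure (snd ` G)"
  proof (rule ccontr)
    assume "xs \<notin> weak_star_closure (snd ` G)"
    moreover have "convex hull (snd ` G) \<subseteq> weak_star_closure (snd ` G)"
      using weak_star_closure_subset assms(3) by (rule hull_minimal)
    ultimately have "xs \<notin> weak_star_closure (convex hull (snd ` G))"
      using weak_star_closure_minimal by blast
    then obtain w \<delta> where "\<delta> > 0"
      and "\<And>c. c \<in> convex hull (snd ` G) \<Longrightarrow> blinfun_apply c w \<le> blinfun_apply xs w - \<delta>"
      using weak_star_separation convex_convex_hull bounded_convex_hull[OF assms(2)] by blast
    then have "xs \<in> snd ` G"
      using assms(1) xs[unfolded mem_snd_fitz_dom_iff[OF assms(2)]] hull_subset[of "snd ` G"]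
      by (intro maximal_monotone_separated_mem_range[where w=w]) auto
    then show False using \<open>xs \<notin> weak_star_closure (snd ` G)\<close> weak_star_closure_subset by blast
  qed
qed

theorem theorem1p6:
  fixes G :: "('a::banach \<times> ('a \<Rightarrow>\<^sub>L real)) set"
  defines "R \<equiv> snd ` G"
  defines "ci \<equiv> (\<forall>xs. xs \<notin> closure R \<longrightarrow>
      (SUP (z, zs)\<in>G. ereal (blinfun_apply (xs - zs) z / norm (xs - zs))) = \<infinity>)"
  defines "cii \<equiv> snd ` fitz_dom G \<subseteq> closure R"
  defines "ciii \<equiv> closure R = closure (convex hull R) \<and>
      closure (convex hull R) = closure (snd ` fitz_dom G)"
  defines "civ \<equiv> convex (closure R)"
  defines "ci' \<equiv> (\<forall>xs. xs \<notin> weak_star_closure R \<longrightarrow>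
      (SUP (z, zs)\<in>G. ereal (blinfun_apply (xs - zs) z / norm (xs - zs))) = \<infinity>)"
  defines "cii' \<equiv> snd ` fitz_dom G \<subseteq> weak_star_closure R"
  defines "ciii' \<equiv> weak_star_closure R = weak_star_closure (convex hull R) \<and>
      weak_star_closure (convex hull R) = weak_star_closure (snd ` fitz_dom G)"
  defines "civ' \<equiv> convex (weak_star_closure R)"
  assumes mono: "monotone_op G"
    and bdd: "bounded R"
  shows "(ci \<longleftrightarrow> cii) \<and> (cii \<longleftrightarrow> ciii)
    \<and> (ciii \<longrightarrow> civ) \<and> (civ \<longrightarrow> civ')
    \<and> (ci \<longrightarrow> ci')
    \<and> (cii \<longrightarrow> cii') \<and> (cii' \<longrightarrow> ciii') \<and> (ciii' \<longrightarrow> ci')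
    \<and> (ciii' \<longrightarrow> civ')
    \<and> (maximal_monotone_op G \<longrightarrow> civ' \<longrightarrow> ci')"
proof -
  let ?D = "snd ` fitz_dom G"
  have "convex hull R \<subseteq> ?D"
    unfolding R_def using graph_subset_fitz_dom[OF mono]
    by (intro hull_minimal image_mono convex_linear_image[OF linear_snd convex_fitz_dom])
  with hull_subset[of R] have closure_chain: "cii \<longleftrightarrow> ciii" and weak_star_chain: "cii' \<longleftrightarrow> ciii'"
    unfolding cii_def ciii_def cii'_def ciii'_def weak_star_closure_def
    using subset_closure_of_iff_closure_of_eq[of R "convex hull R" ?D euclidean]
      subset_closure_of_iff_closure_of_eq[of R "convex hull R" ?D weak_star_topology]
    by simp_all
  have ratio: "\<And>xs. xs \<notin> closure R \<Longrightarrow>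
      (SUP (z, zs)\<in>G. ereal (blinfun_apply (xs - zs) z / norm (xs - zs))) = \<infinity> \<longleftrightarrow> xs \<notin> ?D"
    using SUP_ratio_eq_infinity_iff bdd unfolding R_def by blast
  have "closure R \<subseteq> weak_star_closure R" by (rule closure_subset_weak_star_closure)
  then have "ci \<longleftrightarrow> cii" "ci' \<longleftrightarrow> cii'" "cii \<longrightarrow> cii'"
    unfolding ci_def cii_def ci'_def cii'_def using ratio by blast+
  moreover have "ciii \<longrightarrow> civ" "civ \<longrightarrow> civ'" "ciii' \<longrightarrow> civ'"
    unfolding ciii_def civ_def civ'_def ciii'_def
    by (metis convex_closure convex_convex_hull convex_weak_star_closure weak_star_closure_closure)+
  moreover have "maximal_monotone_op G \<longrightarrow> civ' \<longrightarrow> ci'"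
    using \<open>ci' \<longleftrightarrow> cii'\<close> snd_fitz_dom_subset_weak_star_closure bdd
    unfolding civ'_def cii'_def R_def by blast
  ultimately show ?thesis using closure_chain weak_star_chain by blast
qed

end
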